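(* Let $\mathbb{X}$ be a basic reverse differential restriction category with countable disjoint joins. Let $b_T,b_F:\Gamma\times U\to 1$ be maps with $\overline{b_T}\,\overline{b_F}$ nowhere defined, and let $m,n,v:\Gamma\times U\to T$ be maps. For any map $h:\Gamma\times U\to X$ write $h':=(\pi_0\times 1_U)h:(\Gamma\times U)\times U\to X$. Then $$\langle\langle 1,\pi_1\rangle,v\rangle R\big[\overline{b_T'}\,m'\vee\overline{b_F'}\,n'\big]\pi_1=\overline{b_T}\,\langle\langle 1,\pi_1\rangle,v\rangle R[m']\pi_1\ \vee\ \overline{b_F}\,\langle\langle 1,\pi_1\rangle,v\rangle R[n']\pi_1,$$ where $\langle 1,\pi_1\rangle:\Gamma\times U\to(\Gamma\times U)\times U$. In SDPL terms: $$[\![\Gamma,x{:}U\vdash v.\mathrm{rd}(x{:}U.\ \texttt{if } b\texttt{ then }m\texttt{ else }n)(x)]\!]=[\![\Gamma,x{:}U\vdash \texttt{if } b\texttt{ then } v.\mathrm{rd}(x{:}U.m)(x)\texttt{ else }v.\mathrm{rd}(x{:}U.n)(x)]\!].$$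
   Context: Composition is written in diagrammatic order: $fg$ means "first $f$, then $g$". A restriction category is a category with an operation sending each $f:A\to B$ to a map $\bar f:A\to A$ such that $\bar f f=f$, $\bar f\bar g=\bar g\bar f$ (for $f,g$ with common domain), $\overline{\bar f g}=\bar f\bar g$, and $f\bar g=\overline{fg}\,f$. A map $f$ is total if $\bar f=1$. For parallel maps: - $f\le g$ means $\bar f g=f$; - a nowhere-defined map $\emptyset$ is a least element for $\le$; - $f,g$ are disjoint if $\bar f g$ is nowhere defined; - the join $\bigvee_i f_i$ of a family is its least upper bound for $\le$. "Countable disjoint joins" means that every countable family of pairwise disjoint parallel maps has a join, and composition preserves such joins on both sides: $h(\bigvee_i f_i)k=\bigvee_i hf_ik$. The category has restriction products if: - there is an object $1$ with a total map $!_A:A\to 1$ for each $A$ such that every $f:A\to1$ equals $\bar f\,!_A$; - for all $A,B$ there is an object $A\times B$ with total maps $\pi_0,\pi_1$ such that for all $f:C\to A$, $g:C\to B$ there is a unique $\langle f,g\rangle$ with $\langle f,g\rangle\pi_0=\bar g f$ and $\langle f,g\rangle\pi_1=\bar f g$. Write $f\times g=\langle\pi_0f,\pi_1g\rangle$. A Cartesian left additive restriction category is a restriction category with restriction products in which every hom-set is a commutative monoid $(+,0)$ such that: - $\overline{f+g}=\bar f\bar g$ and $\bar 0=1$; - $x(f+g)=xf+xg$ and $x0=\bar x 0$; - $(f+g)\pi_i=f\pi_i+g\pi_i$ and $0\pi_i=0$. Write $\iota_0=\langle 1,0\rangle$ and $\iota_1=\langle 0,1\rangle$. A basic reverse differential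 restriction category is a Cartesian left additive restriction category with an operation sending each $f:A\to B$ to $R[f]:A\times B\to A$ satisfying: - [RD.1] $R[f+g]=R[f]+R[g]$ and $R[0]=0$. - [RD.2] $\langle a,b+c\rangle R[f]=\langle a,b\rangle R[f]+\langle a,c\rangle R[f]$ and $\langle a,0\rangle R[f]=\overline{af}\,0$. - [RD.3] $R[\pi_j]=\pi_1\iota_j$. - [RD.4] $R[\langle f,g\rangle]=(1\times\pi_0)R[f]+(1\times\pi_1)R[g]$. - [RD.5] $R[fg]=\langle\pi_0,\langle\pi_0f,\pi_1\rangle R[g]\rangle R[f]$. - [RD.8] $\overline{R[f]}=\bar f\times 1$. - [RD.9] $R[\bar f]=(\bar f\times1)\pi_1$. Semantics of SDPL used in the second formulation: - A predicate $b$ is interpreted by a pair $(b_T,b_F)$ of maps into $1$ with disjoint restrictions. - $[\![\texttt{if } b\texttt{ then }m\texttt{ else }n]\!]=\overline{b_T}[\![m]\!]\vee\overline{b_F}[\![n]\!]$. - $[\![v.\mathrm{rd}(x.m)(a)]\!]=\langle\langle 1,[\![a]\!]\rangle,[\![v]\!]\rangle R[[\![m]\!]]\pi_1$. - The term $m$ under the rebinding of $x$ in context $(\Gamma\times U)\times U$ is interpreted as $m'$. *)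

theory Defs
  imports Main "HOL-Library.Countable_Set"
begin

text \<open>Every element of
the arrow type is an arrow with domain and codomain; every element of the object
type is an object. Composition is written in diagrammatic order:
Cmp C f g means first f, then g.\<close>

record ('o, 'a) rdcat =
  Dom  :: "'a \<Rightarrow> 'o"
  Cod  :: "'a \<Rightarrow> 'o"
  Id   :: "'o \<Rightarrow> 'a"
  Cmp  :: "'a \<Rightarrow> 'a \<Rightarrow> 'a"
  Rst  :: "'a \<Rightarrow> 'a"
  One  :: "'o"
  Bang :: "'o \<Rightarrow> 'a"
  Prod :: "'o \<Rightarrow> 'o \<Rightarrow> 'o"
  P0   :: "'o \<Rightarrow> 'o \<Rightarrow> 'a"
  P1   :: "'o \<Rightarrow> 'o \<Rightarrow> 'a"
  Pair :: "'a \<Rightarrow> 'a \<Rightarrow> 'a"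
  Add  :: "'a \<Rightarrow> 'a \<Rightarrow> 'a"
  Zero :: "'o \<Rightarrow> 'o \<Rightarrow> 'a"
  RD   :: "'a \<Rightarrow> 'a"

definition hom :: "('o, 'a, 'z) rdcat_scheme \<Rightarrow> 'o \<Rightarrow> 'o \<Rightarrow> 'a set" where
  "hom C A B = {f. Dom C f = A \<and> Cod C f = B}"

definition is_category :: "('o, 'a, 'z) rdcat_scheme \<Rightarrow> bool" where
  "is_category C \<longleftrightarrow>
     (\<forall>A. Id C A \<in> hom C A A) \<and>
     (\<forall>f g. Cod C f = Dom C g \<longrightarrow> Cmp C f g \<in> hom C (Dom C f) (Cod C g)) \<and>
     (\<forall>f g h. Cod C f = Dom C g \<and> Cod C g = Dom C h \<longrightarrow>
         Cmp C (Cmp C f g) h = Cmp C f (Cmp C g h)) \<and>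
     (\<forall>f. Cmp C (Id C (Dom C f)) f = f \<and> Cmp C f (Id C (Cod C f)) = f)"

definition is_restriction_category :: "('o, 'a, 'z) rdcat_scheme \<Rightarrow> bool" where
  "is_restriction_category C \<longleftrightarrow> is_category C \<and>
     (\<forall>f. Rst C f \<in> hom C (Dom C f) (Dom C f)) \<and>
     (\<forall>f. Cmp C (Rst C f) f = f) \<and>
     (\<forall>f g. Dom C f = Dom C g \<longrightarrow> Cmp C (Rst C f) (Rst C g) = Cmp C (Rst C g) (Rst C f)) \<and>
     (\<forall>f g. Dom C f = Dom C g \<longrightarrow> Rst C (Cmp C (Rst C f) g) = Cmp C (Rst C f) (Rst C g)) \<and>
     (\<forall>f g. Cod C f = Dom C g \<longrightarrow> Cmp C f (Rst C g) = Cmp C (Rst C (Cmp C f g)) f)"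

definition total :: "('o, 'a, 'z) rdcat_scheme \<Rightarrow> 'a \<Rightarrow> bool" where
  "total C f \<longleftrightarrow> Rst C f = Id C (Dom C f)"

definition leq :: "('o, 'a, 'z) rdcat_scheme \<Rightarrow> 'a \<Rightarrow> 'a \<Rightarrow> bool" where
  "leq C f g \<longleftrightarrow> Cmp C (Rst C f) g = f"

definition nowhere_defined :: "('o, 'a, 'z) rdcat_scheme \<Rightarrow> 'a \<Rightarrow> bool" where
  "nowhere_defined C f \<longleftrightarrow> (\<forall>g \<in> hom C (Dom C f) (Cod C f). leq C f g)"

definition disjoint :: "('o, 'a, 'z) rdcat_scheme \<Rightarrow> 'a \<Rightarrow> 'a \<Rightarrow> bool" where
  "disjoint C f g \<longleftrightarrow> nowhere_defined C (Cmp C (Rst C f) g)"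

definition is_join :: "('o, 'a, 'z) rdcat_scheme \<Rightarrow> 'o \<Rightarrow> 'o \<Rightarrow> 'a set \<Rightarrow> 'a \<Rightarrow> bool" where
  "is_join C A B F j \<longleftrightarrow> F \<subseteq> hom C A B \<and> j \<in> hom C A B \<and>
     (\<forall>f\<in>F. leq C f j) \<and>
     (\<forall>g \<in> hom C A B. (\<forall>f\<in>F. leq C f g) \<longrightarrow> leq C j g)"

definition join :: "('o, 'a, 'z) rdcat_scheme \<Rightarrow> 'o \<Rightarrow> 'o \<Rightarrow> 'a set \<Rightarrow> 'a" where
  "join C A B F = (THE j. is_join C A B F j)"

definition has_countable_disjoint_joins :: "('o, 'a, 'z) rdcat_scheme \<Rightarrow> bool" where
  "has_countable_disjoint_joins C \<longleftrightarrow>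
     (\<forall>A B F. F \<subseteq> hom C A B \<and> countable F \<and>
        (\<forall>f\<in>F. \<forall>g\<in>F. f \<noteq> g \<longrightarrow> disjoint C f g) \<longrightarrow>
        (\<exists>j. is_join C A B F j) \<and>
        (\<forall>j A' B' h k. is_join C A B F j \<and> h \<in> hom C A' A \<and> k \<in> hom C B B' \<longrightarrow>
           is_join C A' B' ((\<lambda>f. Cmp C (Cmp C h f) k) ` F) (Cmp C (Cmp C h j) k)))"

definition has_restriction_products :: "('o, 'a, 'z) rdcat_scheme \<Rightarrow> bool" where
  "has_restriction_products C \<longleftrightarrow>
     (\<forall>A. Bang C A \<in> hom C A (One C) \<and> total C (Bang C A)) \<and>
     (\<forall>A f. f \<in> hom C A (One C) \<longrightarrow> f = Cmp C (Rst C f) (Bang C A)) \<and>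
     (\<forall>A B. P0 C A B \<in> hom C (Prod C A B) A \<and> P1 C A B \<in> hom C (Prod C A B) B \<and>
            total C (P0 C A B) \<and> total C (P1 C A B)) \<and>
     (\<forall>A B D f g. f \<in> hom C D A \<and> g \<in> hom C D B \<longrightarrow>
        Pair C f g \<in> hom C D (Prod C A B) \<and>
        Cmp C (Pair C f g) (P0 C A B) = Cmp C (Rst C g) f \<and>
        Cmp C (Pair C f g) (P1 C A B) = Cmp C (Rst C f) g \<and>
        (\<forall>h \<in> hom C D (Prod C A B).
           Cmp C h (P0 C A B) = Cmp C (Rst C g) f \<and> Cmp C h (P1 C A B) = Cmp C (Rst C f) g
           \<longrightarrow> h = Pair C f g))"

definition times :: "('o, 'a, 'z) rdcat_scheme \<Rightarrow> 'a \<Rightarrow> 'a \<Rightarrow> 'a" where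
  "times C f g = Pair C (Cmp C (P0 C (Dom C f) (Dom C g)) f) (Cmp C (P1 C (Dom C f) (Dom C g)) g)"

definition inj0 :: "('o, 'a, 'z) rdcat_scheme \<Rightarrow> 'o \<Rightarrow> 'o \<Rightarrow> 'a" where
  "inj0 C A B = Pair C (Id C A) (Zero C A B)"

definition inj1 :: "('o, 'a, 'z) rdcat_scheme \<Rightarrow> 'o \<Rightarrow> 'o \<Rightarrow> 'a" where
  "inj1 C A B = Pair C (Zero C B A) (Id C B)"

definition is_cartesian_left_additive :: "('o, 'a, 'z) rdcat_scheme \<Rightarrow> bool" where
  "is_cartesian_left_additive C \<longleftrightarrow>
     is_restriction_category C \<and> has_restriction_products C \<and>
     (\<forall>A B. Zero C A B \<in> hom C A B) \<and>
     (\<forall>A B. \<forall>f\<in>hom C A B. \<forall>g\<in>hom C A B. Add C f g \<in> hom C A B \<and> Add C f g = Add C g f) \<and>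
     (\<forall>A B. \<forall>f\<in>hom C A B. \<forall>g\<in>hom C A B. \<forall>h\<in>hom C A B.
        Add C (Add C f g) h = Add C f (Add C g h)) \<and>
     (\<forall>A B. \<forall>f\<in>hom C A B. Add C f (Zero C A B) = f) \<and>
     (\<forall>A B. \<forall>f\<in>hom C A B. \<forall>g\<in>hom C A B. Rst C (Add C f g) = Cmp C (Rst C f) (Rst C g)) \<and>
     (\<forall>A B. Rst C (Zero C A B) = Id C A) \<and>
     (\<forall>D A B. \<forall>x\<in>hom C D A. \<forall>f\<in>hom C A B. \<forall>g\<in>hom C A B.
        Cmp C x (Add C f g) = Add C (Cmp C x f) (Cmp C x g)) \<and>
     (\<forall>D A B. \<forall>x\<in>hom C D A. Cmp C x (Zero C A B) = Cmp C (Rst C x) (Zero C D B)) \<and>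
     (\<forall>D A B. \<forall>f\<in>hom C D (Prod C A B). \<forall>g\<in>hom C D (Prod C A B).
        Cmp C (Add C f g) (P0 C A B) = Add C (Cmp C f (P0 C A B)) (Cmp C g (P0 C A B)) \<and>
        Cmp C (Add C f g) (P1 C A B) = Add C (Cmp C f (P1 C A B)) (Cmp C g (P1 C A B))) \<and>
     (\<forall>D A B. Cmp C (Zero C D (Prod C A B)) (P0 C A B) = Zero C D A \<and>
              Cmp C (Zero C D (Prod C A B)) (P1 C A B) = Zero C D B)"

definition is_basic_rdrc :: "('o, 'a, 'z) rdcat_scheme \<Rightarrow> bool" where
  "is_basic_rdrc C \<longleftrightarrow> is_cartesian_left_additive C \<and>
     (\<forall>A B. \<forall>f\<in>hom C A B. RD C f \<in> hom C (Prod C A B) A) \<and>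
     \<comment> \<open>RD.1\<close>
     (\<forall>A B. \<forall>f\<in>hom C A B. \<forall>g\<in>hom C A B. RD C (Add C f g) = Add C (RD C f) (RD C g)) \<and>
     (\<forall>A B. RD C (Zero C A B) = Zero C (Prod C A B) A) \<and>
     \<comment> \<open>RD.2\<close>
     (\<forall>D A B. \<forall>f\<in>hom C A B. \<forall>a\<in>hom C D A. \<forall>b\<in>hom C D B. \<forall>c\<in>hom C D B.
        Cmp C (Pair C a (Add C b c)) (RD C f) =
          Add C (Cmp C (Pair C a b) (RD C f)) (Cmp C (Pair C a c) (RD C f))) \<and>
     (\<forall>D A B. \<forall>f\<in>hom C A B. \<forall>a\<in>hom C D A.
        Cmp C (Pair C a (Zero C D B)) (RD C f) = Cmp C (Rst C (Cmp C a f)) (Zero C D A)) \<and>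
     \<comment> \<open>RD.3\<close>
     (\<forall>A B. RD C (P0 C A B) = Cmp C (P1 C (Prod C A B) A) (inj0 C A B) \<and>
            RD C (P1 C A B) = Cmp C (P1 C (Prod C A B) B) (inj1 C A B)) \<and>
     \<comment> \<open>RD.4\<close>
     (\<forall>A B D. \<forall>f\<in>hom C A B. \<forall>g\<in>hom C A D.
        RD C (Pair C f g) =
          Add C (Cmp C (times C (Id C A) (P0 C B D)) (RD C f))
                (Cmp C (times C (Id C A) (P1 C B D)) (RD C g))) \<and>
     \<comment> \<open>RD.5\<close>
     (\<forall>A B D. \<forall>f\<in>hom C A B. \<forall>g\<in>hom C B D.
        RD C (Cmp C f g) =
          Cmp C (Pair C (P0 C A D)
                        (Cmp C (Pair C (Cmp C (P0 C A D) f) (P1 C A D)) (RD C g)))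
                (RD C f)) \<and>
     \<comment> \<open>RD.8\<close>
     (\<forall>A B. \<forall>f\<in>hom C A B. Rst C (RD C f) = times C (Rst C f) (Id C B)) \<and>
     \<comment> \<open>RD.9\<close>
     (\<forall>A B. \<forall>f\<in>hom C A B.
        RD C (Rst C f) = Cmp C (times C (Rst C f) (Id C A)) (P1 C A A))"

definition rebind :: "('o, 'a, 'z) rdcat_scheme \<Rightarrow> 'o \<Rightarrow> 'o \<Rightarrow> 'a \<Rightarrow> 'a" where
  "rebind C G U h = Cmp C (times C (P0 C G U) (Id C U)) h"

end

(* Both sides are joins of two disjoint maps. Combining RD.5 with RD.9, the reverse
   derivative of a guarded map is again guarded: R[rst c \<odot> f] = rst (\<pi>0 \<odot> rst c) \<odot> R[f].
   So for a and b below their join j, R[a] and R[b] are restrictions of R[j]; since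
   restriction preserves disjoint joins, R pre- and post-composed with arbitrary maps
   preserves them as well. Along \<langle>\<langle>1, \<pi>1\<rangle>, v\<rangle> the guard coming from a rebound predicate b'
   collapses to rst b, because \<langle>1, \<pi>1\<rangle> \<odot> (\<pi>0 \<times> 1) = 1. *)

theory Submission
  imports Defs
begin

locale restriction_cat =
  fixes C :: "('o, 'a, 'z) rdcat_scheme"
  assumes restriction_category: "is_restriction_category C"
begin

abbreviation cmp (infixl "\<odot>" 70) where "f \<odot> g \<equiv> Cmp C f g"
abbreviation rst where "rst f \<equiv> Rst C f"

lemma category: "is_category C"
  using restriction_category by (simp add: is_restriction_category_def)

lemma dom_Id [simp]: "Dom C (Id C A) = A" and cod_Id [simp]: "Cod C (Id C A) = A"
  using category by (auto simp: is_category_def hom_def)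

lemma dom_cmp [simp]: "Cod C f = Dom C g \<Longrightarrow> Dom C (f \<odot> g) = Dom C f"
  and cod_cmp [simp]: "Cod C f = Dom C g \<Longrightarrow> Cod C (f \<odot> g) = Cod C g"
  using category by (auto simp: is_category_def hom_def)

lemma cmp_assoc [simp]:
  "Cod C f = Dom C g \<Longrightarrow> Cod C g = Dom C h \<Longrightarrow> f \<odot> g \<odot> h = f \<odot> (g \<odot> h)"
  using category by (auto simp: is_category_def)

lemma Id_cmp [simp]: "Dom C f = A \<Longrightarrow> Id C A \<odot> f = f"
  and cmp_Id [simp]: "Cod C f = B \<Longrightarrow> f \<odot> Id C B = f"
  using category by (auto simp: is_category_def)

lemma dom_rst [simp]: "Dom C (rst f) = Dom C f" and cod_rst [simp]: "Cod C (rst f) = Dom C f"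
  using restriction_category by (auto simp: is_restriction_category_def hom_def)

lemma rst_cmp_self [simp]: "rst f \<odot> f = f"
  using restriction_category by (simp add: is_restriction_category_def)

lemma rst_commute: "Dom C f = Dom C g \<Longrightarrow> rst f \<odot> rst g = rst g \<odot> rst f"
  using restriction_category unfolding is_restriction_category_def by blast

lemma rst_rst_cmp: "Dom C f = Dom C g \<Longrightarrow> rst (rst f \<odot> g) = rst f \<odot> rst g"
  using restriction_category unfolding is_restriction_category_def by blast

lemma cmp_rst: "Cod C f = Dom C g \<Longrightarrow> f \<odot> rst g = rst (f \<odot> g) \<odot> f"
  using restriction_category unfolding is_restriction_category_def by blast

lemma rst_Id [simp]: "rst (Id C A) = Id C A"
  using rst_cmp_self[of "Id C A"] cmp_Id[of "rst (Id C A)" A] by simp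

lemma rst_rst [simp]: "rst (rst f) = rst f"
  using rst_rst_cmp[of f "Id C (Dom C f)"] by simp

lemma rst_idem [simp]: "rst f \<odot> rst f = rst f"
  using rst_cmp_self[of "rst f"] by simp

lemma rst_cmp_self_cmp [simp]: "Cod C f = Dom C g \<Longrightarrow> rst f \<odot> (f \<odot> g) = f \<odot> g"
  using cmp_assoc[of "rst f" f g] by simp

lemma rst_idem_cmp [simp]: "Dom C g = Dom C f \<Longrightarrow> rst f \<odot> (rst f \<odot> g) = rst f \<odot> g"
  using cmp_assoc[of "rst f" "rst f" g] by simp

lemma rst_left_commute:
  assumes "Dom C f = Dom C g" "Dom C h = Dom C f"
  shows "rst f \<odot> (rst g \<odot> h) = rst g \<odot> (rst f \<odot> h)"
proof -
  have "rst f \<odot> (rst g \<odot> h) = rst f \<odot> rst g \<odot> h" using assms by simp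
  also have "\<dots> = rst g \<odot> rst f \<odot> h" using rst_commute[OF assms(1)] by simp
  finally show ?thesis using assms by simp
qed

lemma rst_cmp_absorb:
  assumes "Cod C f = Dom C g"
  shows "rst (f \<odot> g) \<odot> rst f = rst (f \<odot> g)"
proof -
  have "rst (f \<odot> g) = rst (rst f \<odot> (f \<odot> g))" using assms by simp
  also have "\<dots> = rst f \<odot> rst (f \<odot> g)" by (rule rst_rst_cmp) (use assms in simp)
  also have "\<dots> = rst (f \<odot> g) \<odot> rst f" using assms by (simp add: rst_commute)
  finally show ?thesis by simp
qed

lemma rst_cmp_rst:
  assumes "Cod C f = Dom C g"
  shows "rst (f \<odot> rst g) = rst (f \<odot> g)"
proof -
  have "rst (f \<odot> rst g) = rst (rst (f \<odot> g) \<odot> f)" using cmp_rst[OF assms] by simp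
  also have "\<dots> = rst (f \<odot> g) \<odot> rst f" by (rule rst_rst_cmp) (use assms in simp)
  finally show ?thesis using rst_cmp_absorb[OF assms] by simp
qed

lemma cmp_guard:
  assumes "Cod C h = Dom C c" "Dom C c = Dom C f"
  shows "rst (h \<odot> c) \<odot> (h \<odot> f) = h \<odot> (rst c \<odot> f)"
  using assms cmp_rst[of h c] cmp_assoc[of "rst (h \<odot> c)" h f] cmp_assoc[of h "rst c" f]
  by simp

lemma leq_antisym:
  assumes "Dom C f = Dom C g" "leq C f g" "leq C g f"
  shows "f = g"
proof -
  have f: "rst f \<odot> g = f" and g: "rst g \<odot> f = g" using assms by (simp_all add: leq_def)
  have "rst f = rst f \<odot> rst g" using rst_rst_cmp[of f g] assms(1) f by simp
  also have "\<dots> = rst g" using rst_rst_cmp[of g f] assms(1) g rst_commute[of f g] by simp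
  finally show ?thesis using f by (metis rst_cmp_self)
qed

lemma leq_refl: "leq C f f"
  by (simp add: leq_def)

lemma is_join_unique: "is_join C A B F j \<Longrightarrow> is_join C A B F j' \<Longrightarrow> j = j'"
  by (rule leq_antisym) (auto simp: is_join_def hom_def)

lemma join_eqI: "is_join C A B F j \<Longrightarrow> join C A B F = j"
  unfolding join_def using is_join_unique by blast

lemma nowhere_defined_iff_join_empty:
  "nowhere_defined C x \<longleftrightarrow> is_join C (Dom C x) (Cod C x) {} x"
  by (simp add: nowhere_defined_def is_join_def hom_def)

lemma nowhere_defined_unique:
  assumes "nowhere_defined C x" "nowhere_defined C y" "Dom C x = Dom C y" "Cod C x = Cod C y"
  shows "x = y"
  using assms by (intro leq_antisym) (auto simp: nowhere_defined_def hom_def)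

end

locale restriction_cat_joins = restriction_cat +
  assumes disjoint_joins: "has_countable_disjoint_joins C"
begin

lemma
  assumes "F \<subseteq> hom C A B" "countable F" "\<forall>f\<in>F. \<forall>g\<in>F. f \<noteq> g \<longrightarrow> disjoint C f g"
  shows is_join_exists: "\<exists>j. is_join C A B F j"
    and is_join_cmp: "is_join C A B F j \<Longrightarrow> h \<in> hom C A' A \<Longrightarrow> k \<in> hom C B B' \<Longrightarrow>
           is_join C A' B' ((\<lambda>f. h \<odot> f \<odot> k) ` F) (h \<odot> j \<odot> k)"
  using disjoint_joins[unfolded has_countable_disjoint_joins_def, rule_format, where A=A and B=B and F=F] assms
  by blast+

lemma nowhere_defined_cmp:
  assumes "nowhere_defined C x" "Cod C h = Dom C x" "Dom C k = Cod C x"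
  shows "nowhere_defined C (h \<odot> x \<odot> k)"
proof -
  have "is_join C (Dom C h) (Cod C k) ((\<lambda>f. h \<odot> f \<odot> k) ` {}) (h \<odot> x \<odot> k)"
    by (rule is_join_cmp[of "{}" "Dom C x" "Cod C x"])
      (use assms in \<open>simp_all add: nowhere_defined_iff_join_empty hom_def\<close>)
  thus ?thesis using assms by (simp add: nowhere_defined_iff_join_empty)
qed

lemma nowhere_defined_cmp_left: "nowhere_defined C x \<Longrightarrow> Cod C h = Dom C x \<Longrightarrow> nowhere_defined C (h \<odot> x)"
  using nowhere_defined_cmp[of x h "Id C (Cod C x)"] by simp

lemma nowhere_defined_cmp_right: "nowhere_defined C x \<Longrightarrow> Dom C k = Cod C x \<Longrightarrow> nowhere_defined C (x \<odot> k)"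
  using nowhere_defined_cmp[of x "Id C (Dom C x)" k] by simp

lemma nowhere_defined_rst_iff: "nowhere_defined C (rst x) \<longleftrightarrow> nowhere_defined C x"
proof
  show "nowhere_defined C (rst x) \<Longrightarrow> nowhere_defined C x"
    using nowhere_defined_cmp_right[of "rst x" x] by simp
next
  assume x: "nowhere_defined C x"
  \<comment> \<open>the nowhere-defined endomap e of Dom x has e x = x, so rst x = rst (e rst x) = rst e = e\<close>
  obtain e where e: "is_join C (Dom C x) (Dom C x) {} e"
    using is_join_exists[of "{}" "Dom C x" "Dom C x"] by auto
  have e_hom: "Dom C e = Dom C x" "Cod C e = Dom C x" using e by (auto simp: is_join_def hom_def)
  have e_nd: "nowhere_defined C e" using e e_hom by (simp add: nowhere_defined_iff_join_empty)
  have "leq C e (Id C (Dom C x))"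
    using e_nd e_hom by (simp add: nowhere_defined_def hom_def)
  then have "rst e = e" using e_hom by (simp add: leq_def)
  moreover have "e \<odot> x = x"
    by (rule nowhere_defined_unique[OF nowhere_defined_cmp_right[OF e_nd] x]) (simp_all add: e_hom)
  moreover have "e \<odot> rst x = e"
    by (rule nowhere_defined_unique[OF nowhere_defined_cmp_right[OF e_nd] e_nd]) (simp_all add: e_hom)
  ultimately show "nowhere_defined C (rst x)"
    using rst_cmp_rst[of e x] e_hom e_nd by simp
qed

lemma disjoint_iff_rst:
  assumes "Dom C a = Dom C b"
  shows "disjoint C a b \<longleftrightarrow> nowhere_defined C (rst a \<odot> rst b)"
  using assms nowhere_defined_rst_iff[of "rst a \<odot> b"] by (simp add: disjoint_def rst_rst_cmp)

lemma disjoint_sym: "Dom C a = Dom C b \<Longrightarrow> disjoint C a b \<Longrightarrow> disjoint C b a"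
  by (simp add: disjoint_iff_rst rst_commute)

lemma disjoint_rst: "Dom C a = Dom C b \<Longrightarrow> disjoint C a b \<Longrightarrow> disjoint C (rst a) (rst b)"
  by (simp add: disjoint_iff_rst)

lemma disjoint_cmp_left:
  assumes "Dom C a = Dom C b" "Cod C h = Dom C a" "disjoint C a b"
  shows "disjoint C (h \<odot> a) (h \<odot> b)"
  using assms nowhere_defined_cmp_left[of "rst a \<odot> b" h] cmp_guard[of h a b]
  by (simp add: disjoint_def)

lemma disjoint_guards:
  assumes "nowhere_defined C (rst c \<odot> rst c')"
    and "Dom C c = Dom C c'" "Dom C f = Dom C c" "Dom C g = Dom C c"
  shows "disjoint C (rst c \<odot> f) (rst c' \<odot> g)"
proof -
  have "rst (rst c \<odot> f) \<odot> rst (rst c' \<odot> g) = rst f \<odot> (rst c \<odot> rst c') \<odot> rst g"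
    using assms(2-) by (simp add: rst_rst_cmp rst_left_commute)
  thus ?thesis
    using assms nowhere_defined_cmp[OF assms(1), of "rst f" "rst g"] by (simp add: disjoint_iff_rst)
qed

lemma pairwise_disjoint_pair:
  "a \<in> hom C A B \<Longrightarrow> b \<in> hom C A B \<Longrightarrow> disjoint C a b \<Longrightarrow>
     \<forall>f\<in>{a, b}. \<forall>g\<in>{a, b}. f \<noteq> g \<longrightarrow> disjoint C f g"
  using disjoint_sym[of a b] by (auto simp: hom_def)

lemma is_join_pair_exists:
  assumes "a \<in> hom C A B" "b \<in> hom C A B" "disjoint C a b"
  shows "\<exists>j. is_join C A B {a, b} j"
proof (rule is_join_exists)
  show "{a, b} \<subseteq> hom C A B" using assms by simp
  show "\<forall>f\<in>{a, b}. \<forall>g\<in>{a, b}. f \<noteq> g \<longrightarrow> disjoint C f g"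
    by (rule pairwise_disjoint_pair[OF assms])
qed simp

lemma is_join_pair_cmp:
  assumes "a \<in> hom C A B" "b \<in> hom C A B" "disjoint C a b" "is_join C A B {a, b} j"
    and "h \<in> hom C D A" "k \<in> hom C B E"
  shows "is_join C D E {h \<odot> a \<odot> k, h \<odot> b \<odot> k} (h \<odot> j \<odot> k)"
proof -
  have "is_join C D E ((\<lambda>f. h \<odot> f \<odot> k) ` {a, b}) (h \<odot> j \<odot> k)"
    by (rule is_join_cmp) (use assms pairwise_disjoint_pair[OF assms(1-3)] in simp_all)
  then show ?thesis by simp
qed

lemma is_join_pair_rst:
  assumes a: "a \<in> hom C A B" and b: "b \<in> hom C A B" and ab: "disjoint C a b"
    and j: "is_join C A B {a, b} j"
  shows "is_join C A A {rst a, rst b} (rst j)"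
proof -
  have hom: "Dom C a = A" "Dom C b = A" "Dom C j = A" "Cod C j = B"
    using a b j by (auto simp: is_join_def hom_def)
  have rst_hom: "rst a \<in> hom C A A" "rst b \<in> hom C A A" "rst j \<in> hom C A A"
    using hom by (auto simp: hom_def)
  have below: "rst a \<odot> j = a" "rst b \<odot> j = b" using j by (auto simp: is_join_def leq_def)
  have rst_ab: "disjoint C (rst a) (rst b)" using disjoint_rst[OF _ ab] hom by simp
  obtain k where k: "is_join C A A {rst a, rst b} k" using is_join_pair_exists[OF rst_hom(1,2) rst_ab] by auto
  have k_hom: "Dom C k = A" "Cod C k = A" using k by (auto simp: is_join_def hom_def)
  have k_least: "\<And>g. g \<in> hom C A A \<Longrightarrow> leq C (rst a) g \<Longrightarrow> leq C (rst b) g \<Longrightarrow> leq C k g"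
    using k by (simp add: is_join_def)
  have "rst k = k"
    using k_least[of "Id C A"] hom k_hom by (simp add: hom_def leq_def)
  have "is_join C A B {Id C A \<odot> rst a \<odot> j, Id C A \<odot> rst b \<odot> j} (Id C A \<odot> k \<odot> j)"
    using j by (intro is_join_pair_cmp[OF rst_hom(1,2) rst_ab k]) (auto simp: is_join_def hom_def)
  then have "is_join C A B {a, b} (k \<odot> j)" using below hom k_hom by simp
  then have "k \<odot> j = j" using j by (rule is_join_unique)
  then have "leq C (rst j) k"
    using rst_rst_cmp[of k j] rst_commute[of k j] \<open>rst k = k\<close> hom k_hom by (simp add: leq_def)
  moreover have "leq C k (rst j)"
    using k_least[OF rst_hom(3)] rst_rst_cmp[of a j] rst_rst_cmp[of b j] below hom
    by (simp add: leq_def)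
  ultimately have "rst j = k" by (rule leq_antisym[rotated]) (simp add: hom k_hom)
  with k show ?thesis by simp
qed

end

locale restriction_cat_products = restriction_cat +
  assumes restriction_products: "has_restriction_products C"
begin

lemma projections:
  "P0 C A B \<in> hom C (Prod C A B) A \<and> P1 C A B \<in> hom C (Prod C A B) B \<and>
   total C (P0 C A B) \<and> total C (P1 C A B)"
  using restriction_products[unfolded has_restriction_products_def, THEN conjunct2, THEN conjunct2,
      THEN conjunct1] by blast

lemma dom_P0 [simp]: "Dom C (P0 C A B) = Prod C A B" and cod_P0 [simp]: "Cod C (P0 C A B) = A"
  and dom_P1 [simp]: "Dom C (P1 C A B) = Prod C A B" and cod_P1 [simp]: "Cod C (P1 C A B) = B"
  and rst_P0 [simp]: "rst (P0 C A B) = Id C (Prod C A B)"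
  and rst_P1 [simp]: "rst (P1 C A B) = Id C (Prod C A B)"
  using projections[of A B] by (auto simp: hom_def total_def)

lemma pairing:
  assumes "Dom C f = Dom C g"
  shows "Pair C f g \<in> hom C (Dom C f) (Prod C (Cod C f) (Cod C g)) \<and>
        Pair C f g \<odot> P0 C (Cod C f) (Cod C g) = rst g \<odot> f \<and>
        Pair C f g \<odot> P1 C (Cod C f) (Cod C g) = rst f \<odot> g \<and>
        (\<forall>h \<in> hom C (Dom C f) (Prod C (Cod C f) (Cod C g)).
           h \<odot> P0 C (Cod C f) (Cod C g) = rst g \<odot> f \<and> h \<odot> P1 C (Cod C f) (Cod C g) = rst f \<odot> g
           \<longrightarrow> h = Pair C f g)"
  using restriction_products[unfolded has_restriction_products_def, THEN conjunct2, THEN conjunct2,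
      THEN conjunct2, rule_format, where A="Cod C f" and B="Cod C g" and D="Dom C f" and f=f and g=g]
    assms
  by (simp add: hom_def)

lemma dom_Pair [simp]: "Dom C f = Dom C g \<Longrightarrow> Dom C (Pair C f g) = Dom C f"
  and cod_Pair [simp]: "Dom C f = Dom C g \<Longrightarrow> Cod C (Pair C f g) = Prod C (Cod C f) (Cod C g)"
  using pairing[of f g] by (auto simp: hom_def)

lemma Pair_P0 [simp]:
  "Dom C f = Dom C g \<Longrightarrow> Cod C f = A \<Longrightarrow> Cod C g = B \<Longrightarrow> Pair C f g \<odot> P0 C A B = rst g \<odot> f"
  and Pair_P1 [simp]:
  "Dom C f = Dom C g \<Longrightarrow> Cod C f = A \<Longrightarrow> Cod C g = B \<Longrightarrow> Pair C f g \<odot> P1 C A B = rst f \<odot> g"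
  using pairing[of f g] by auto

lemma Pair_P0_cmp [simp]:
  "Dom C f = Dom C g \<Longrightarrow> Cod C f = A \<Longrightarrow> Cod C g = B \<Longrightarrow> Dom C h = A \<Longrightarrow>
     Pair C f g \<odot> (P0 C A B \<odot> h) = rst g \<odot> (f \<odot> h)"
  and Pair_P1_cmp [simp]:
  "Dom C f = Dom C g \<Longrightarrow> Cod C f = A \<Longrightarrow> Cod C g = B \<Longrightarrow> Dom C h = B \<Longrightarrow>
     Pair C f g \<odot> (P1 C A B \<odot> h) = rst f \<odot> (g \<odot> h)"
  using cmp_assoc[of "Pair C f g" "P0 C A B" h] cmp_assoc[of "rst g" f h]
    cmp_assoc[of "Pair C f g" "P1 C A B" h] cmp_assoc[of "rst f" g h]
  by simp_all

lemma Pair_unique: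
  assumes "Dom C f = Dom C g" "Cod C f = A" "Cod C g = B"
    and "Dom C h = Dom C f" "Cod C h = Prod C A B"
    and "h \<odot> P0 C A B = rst g \<odot> f" "h \<odot> P1 C A B = rst f \<odot> g"
  shows "h = Pair C f g"
  using pairing[OF assms(1)] assms by (auto simp: hom_def)

lemma cmp_Pair:
  assumes "Dom C f = Dom C g" "Cod C h = Dom C f"
  shows "h \<odot> Pair C f g = Pair C (h \<odot> f) (h \<odot> g)"
proof (rule Pair_unique[where A="Cod C f" and B="Cod C g"])
  have "h \<odot> Pair C f g \<odot> P0 C (Cod C f) (Cod C g) = h \<odot> (rst g \<odot> f)" using assms by simp
  also have "\<dots> = rst (h \<odot> g) \<odot> (h \<odot> f)" by (rule cmp_guard[symmetric]) (use assms in simp_all)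
  finally show "h \<odot> Pair C f g \<odot> P0 C (Cod C f) (Cod C g) = rst (h \<odot> g) \<odot> (h \<odot> f)" .
  have "h \<odot> Pair C f g \<odot> P1 C (Cod C f) (Cod C g) = h \<odot> (rst f \<odot> g)" using assms by simp
  also have "\<dots> = rst (h \<odot> f) \<odot> (h \<odot> g)" by (rule cmp_guard[symmetric]) (use assms in simp_all)
  finally show "h \<odot> Pair C f g \<odot> P1 C (Cod C f) (Cod C g) = rst (h \<odot> f) \<odot> (h \<odot> g)" .
qed (use assms in simp_all)

lemma Pair_P0_P1: "Pair C (P0 C A B) (P1 C A B) = Id C (Prod C A B)"
  by (rule Pair_unique[symmetric, where A=A and B=B]) simp_all

lemma rst_cmp_Pair: "Dom C f = Dom C g \<Longrightarrow> rst g \<odot> Pair C f g = Pair C f g"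
  by (rule Pair_unique[where A="Cod C f" and B="Cod C g"]) (simp_all add: rst_left_commute[of g f g])

lemma dom_times [simp]: "Dom C (times C f g) = Prod C (Dom C f) (Dom C g)"
  and cod_times [simp]: "Cod C (times C f g) = Prod C (Cod C f) (Cod C g)"
  by (simp_all add: times_def)

lemma times_rst_Id:
  assumes "Dom C c = A"
  shows "times C (rst c) (Id C B) = rst (P0 C A B \<odot> rst c)"
proof -
  have "times C (rst c) (Id C B) = Pair C (P0 C A B \<odot> rst c) (P1 C A B)"
    using assms by (simp add: times_def)
  also have "\<dots> = rst (P0 C A B \<odot> rst c)"
  proof (rule Pair_unique[symmetric, where A=A and B=B])
    show "rst (P0 C A B \<odot> rst c) \<odot> P0 C A B = rst (P1 C A B) \<odot> (P0 C A B \<odot> rst c)"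
      using cmp_rst[of "P0 C A B" "rst c"] assms by simp
  qed (use assms in simp_all)
  finally show ?thesis .
qed

end

locale reverse_diff_restriction_cat =
  fixes C :: "('o, 'a, 'z) rdcat_scheme"
  assumes basic_rdrc: "is_basic_rdrc C"

sublocale reverse_diff_restriction_cat \<subseteq> restriction_cat_products
  using basic_rdrc by unfold_locales (simp_all add: is_basic_rdrc_def is_cartesian_left_additive_def)

context reverse_diff_restriction_cat
begin

lemma dom_RD [simp]: "Dom C (RD C f) = Prod C (Dom C f) (Cod C f)"
  and cod_RD [simp]: "Cod C (RD C f) = Dom C f"
proof -
  have "\<forall>A B. \<forall>f\<in>hom C A B. RD C f \<in> hom C (Prod C A B) A"
    using basic_rdrc unfolding is_basic_rdrc_def by (elim conjE)
  then have "RD C f \<in> hom C (Prod C (Dom C f) (Cod C f)) (Dom C f)" by (simp add: hom_def)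
  then show "Dom C (RD C f) = Prod C (Dom C f) (Cod C f)" "Cod C (RD C f) = Dom C f"
    by (simp_all add: hom_def)
qed

lemma RD_cmp:
  assumes "Cod C f = Dom C g"
  shows "RD C (f \<odot> g) = Pair C (P0 C (Dom C f) (Cod C g))
            (Pair C (P0 C (Dom C f) (Cod C g) \<odot> f) (P1 C (Dom C f) (Cod C g)) \<odot> RD C g) \<odot> RD C f"
proof -
  have "\<forall>A B D. \<forall>f\<in>hom C A B. \<forall>g\<in>hom C B D.
        RD C (f \<odot> g) = Pair C (P0 C A D) (Pair C (P0 C A D \<odot> f) (P1 C A D) \<odot> RD C g) \<odot> RD C f"
    using basic_rdrc unfolding is_basic_rdrc_def by (elim conjE)
  then show ?thesis using assms by (simp add: hom_def)
qed

lemma RD_rst: "RD C (rst f) = times C (rst f) (Id C (Dom C f)) \<odot> P1 C (Dom C f) (Dom C f)"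
proof -
  have "\<forall>A B. \<forall>f\<in>hom C A B. RD C (rst f) = times C (rst f) (Id C A) \<odot> P1 C A A"
    using basic_rdrc unfolding is_basic_rdrc_def by (elim conjE)
  then show ?thesis by (simp add: hom_def)
qed

lemma RD_guard:
  assumes "Dom C c = Dom C f"
  shows "RD C (rst c \<odot> f) = rst (P0 C (Dom C f) (Cod C f) \<odot> rst c) \<odot> RD C f"
proof -
  define A B where "A = Dom C f" and "B = Cod C f"
  define e where "e = rst (P0 C A B \<odot> rst c)"
  define X where "X = e \<odot> RD C f"
  define Y where "Y = Pair C (P0 C A B) X"
  have c: "Dom C c = A" using assms A_def by simp
  have e: "Dom C e = Prod C A B" "Cod C e = Prod C A B" "Pair C (P0 C A B \<odot> rst c) (P1 C A B) = e"
    using times_rst_Id[OF c, of B] c unfolding e_def by (simp_all add: times_def)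
  have X: "Dom C X = Prod C A B" "Cod C X = A" unfolding X_def using e A_def B_def by simp_all
  have Y: "Dom C Y = Prod C A B" "Cod C Y = Prod C A A" unfolding Y_def using X by simp_all
  have "RD C (rst c \<odot> f) = Y \<odot> RD C (rst c)"
    using RD_cmp[of "rst c" f] assms e(3) unfolding A_def B_def X_def Y_def by simp
  also have "RD C (rst c) = rst (P0 C A A \<odot> rst c) \<odot> P1 C A A"
    using RD_rst[of c] times_rst_Id[OF c, of A] c by simp
  also have "Y \<odot> (rst (P0 C A A \<odot> rst c) \<odot> P1 C A A) = (Y \<odot> rst (P0 C A A \<odot> rst c)) \<odot> P1 C A A"
    using Y c by simp
  also have "Y \<odot> rst (P0 C A A \<odot> rst c) = rst (Y \<odot> (P0 C A A \<odot> rst c)) \<odot> Y"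
    by (rule cmp_rst) (use Y c in simp)
  also have "Y \<odot> (P0 C A A \<odot> rst c) = rst X \<odot> (P0 C A B \<odot> rst c)"
    unfolding Y_def using X c by simp
  also have "rst (rst X \<odot> (P0 C A B \<odot> rst c)) = rst X \<odot> e"
    unfolding e_def by (rule rst_rst_cmp) (use X c in simp)
  also have "rst X \<odot> e \<odot> Y \<odot> P1 C A A = rst X \<odot> (e \<odot> X)"
    unfolding Y_def using X e by simp
  also have "\<dots> = e \<odot> X"
    unfolding e_def using rst_left_commute[of X "P0 C A B \<odot> rst c" X] X c by simp
  also have "\<dots> = e \<odot> RD C f" unfolding X_def e_def using A_def B_def c by simp
  finally show ?thesis unfolding e_def A_def B_def .
qed

lemma RD_of_leq:
  assumes "leq C x j" "Dom C x = Dom C j"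
  shows "RD C x = rst (P0 C (Dom C j) (Cod C j) \<odot> x) \<odot> RD C j"
proof -
  have "RD C x = RD C (rst x \<odot> j)" using assms(1) by (simp add: leq_def)
  also have "\<dots> = rst (P0 C (Dom C j) (Cod C j) \<odot> rst x) \<odot> RD C j"
    by (rule RD_guard) (use assms(2) in simp)
  finally show ?thesis using rst_cmp_rst[of "P0 C (Dom C j) (Cod C j)" x] assms(2) by simp
qed

lemma cmp_RD_guard:
  assumes "Cod C h = Prod C (Dom C f) (Cod C f)" "Dom C c = Dom C f"
  shows "h \<odot> RD C (rst c \<odot> f) = rst (h \<odot> P0 C (Dom C f) (Cod C f) \<odot> c) \<odot> (h \<odot> RD C f)"
proof -
  let ?s = "P0 C (Dom C f) (Cod C f)"
  have "h \<odot> RD C (rst c \<odot> f) = (h \<odot> rst (?s \<odot> rst c)) \<odot> RD C f"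
    using RD_guard[OF assms(2)] assms by simp
  also have "h \<odot> rst (?s \<odot> rst c) = rst (h \<odot> (?s \<odot> rst c)) \<odot> h"
    by (rule cmp_rst) (use assms in simp)
  also have "rst (h \<odot> (?s \<odot> rst c)) = rst (h \<odot> ?s \<odot> c)"
    using rst_cmp_rst[of "h \<odot> ?s" c] assms by simp
  finally show ?thesis using assms by simp
qed

lemma diagonal_cmp_rebinding:
  "Pair C (Id C (Prod C G U)) (P1 C G U) \<odot> times C (P0 C G U) (Id C U) = Id C (Prod C G U)"
proof -
  let ?L = "Pair C (Id C (Prod C G U)) (P1 C G U)"
  have "?L \<odot> times C (P0 C G U) (Id C U) =
        Pair C (?L \<odot> (P0 C (Prod C G U) U \<odot> P0 C G U)) (?L \<odot> P1 C (Prod C G U) U)"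
    unfolding times_def using cmp_Pair[of "P0 C (Prod C G U) U \<odot> P0 C G U" "P1 C (Prod C G U) U" ?L]
    by simp
  also have "\<dots> = Pair C (P0 C G U) (P1 C G U)" by simp
  finally show ?thesis by (simp add: Pair_P0_P1)
qed

lemma RD_rebind_guard:
  assumes "Dom C x = Prod C G U" "Dom C y = Prod C G U" "Dom C v = Prod C G U" "Cod C v = Cod C y"
  defines "Q \<equiv> Pair C (Pair C (Id C (Prod C G U)) (P1 C G U)) v"
  shows "Q \<odot> RD C (rst (rebind C G U x) \<odot> rebind C G U y) = rst x \<odot> (Q \<odot> RD C (rebind C G U y))"
proof -
  let ?L = "Pair C (Id C (Prod C G U)) (P1 C G U)" and ?p = "times C (P0 C G U) (Id C U)"
  have "Q \<odot> RD C (rst (?p \<odot> x) \<odot> (?p \<odot> y)) =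
        rst (Q \<odot> P0 C (Prod C (Prod C G U) U) (Cod C y) \<odot> (?p \<odot> x)) \<odot> (Q \<odot> RD C (?p \<odot> y))"
    using cmp_RD_guard[of Q "?p \<odot> y" "?p \<odot> x"] assms unfolding Q_def by simp
  also have "Q \<odot> P0 C (Prod C (Prod C G U) U) (Cod C y) \<odot> (?p \<odot> x) = rst v \<odot> (?L \<odot> ?p \<odot> x)"
    unfolding Q_def using assms by simp
  also have "\<dots> = rst v \<odot> x" using assms by (simp add: diagonal_cmp_rebinding)
  also have "rst (rst v \<odot> x) \<odot> (Q \<odot> RD C (?p \<odot> y)) = rst x \<odot> (rst v \<odot> Q \<odot> RD C (?p \<odot> y))"
    using rst_rst_cmp[of v x] rst_left_commute[of v x "Q \<odot> RD C (?p \<odot> y)"] assms unfolding Q_def by simp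
  also have "rst v \<odot> Q = Q" unfolding Q_def by (rule rst_cmp_Pair) (simp add: assms)
  finally show ?thesis by (simp add: rebind_def)
qed

end

locale reverse_diff_restriction_cat_joins = reverse_diff_restriction_cat + restriction_cat_joins
begin

lemma is_join_pair_RD:
  assumes a: "a \<in> hom C A B" and b: "b \<in> hom C A B" and ab: "disjoint C a b"
    and j: "is_join C A B {a, b} j"
    and h: "h \<in> hom C D (Prod C A B)" and k: "k \<in> hom C A E"
  shows "is_join C D E {h \<odot> RD C a \<odot> k, h \<odot> RD C b \<odot> k} (h \<odot> RD C j \<odot> k)"
proof -
  let ?s = "P0 C A B"
  have hom: "Dom C a = A" "Cod C a = B" "Dom C b = A" "Cod C b = B" "Dom C j = A" "Cod C j = B"
    "Dom C h = D" "Cod C h = Prod C A B" "Dom C k = A" "Cod C k = E"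
    using a b j h k by (auto simp: is_join_def hom_def)
  have "is_join C (Prod C A B) B {?s \<odot> a \<odot> Id C B, ?s \<odot> b \<odot> Id C B} (?s \<odot> j \<odot> Id C B)"
    by (rule is_join_pair_cmp[OF a b ab j]) (simp_all add: hom_def)
  then have sj: "is_join C (Prod C A B) B {?s \<odot> a, ?s \<odot> b} (?s \<odot> j)" using hom by simp
  have s_hom: "?s \<odot> a \<in> hom C (Prod C A B) B" "?s \<odot> b \<in> hom C (Prod C A B) B"
    using hom by (simp_all add: hom_def)
  have s_disj: "disjoint C (?s \<odot> a) (?s \<odot> b)" using disjoint_cmp_left[OF _ _ ab] hom by simp
  have "is_join C D E {h \<odot> rst (?s \<odot> a) \<odot> (RD C j \<odot> k), h \<odot> rst (?s \<odot> b) \<odot> (RD C j \<odot> k)}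
                      (h \<odot> rst (?s \<odot> j) \<odot> (RD C j \<odot> k))"
  proof (rule is_join_pair_cmp[OF _ _ _ is_join_pair_rst[OF s_hom s_disj sj] h])
    show "disjoint C (rst (?s \<odot> a)) (rst (?s \<odot> b))" using disjoint_rst[OF _ s_disj] hom by simp
    show "RD C j \<odot> k \<in> hom C (Prod C A B) E" using hom by (simp add: hom_def)
  qed (use hom in \<open>simp_all add: hom_def\<close>)
  moreover have "h \<odot> rst (?s \<odot> x) \<odot> (RD C j \<odot> k) = h \<odot> RD C x \<odot> k" if "x \<in> {a, b, j}" for x
  proof -
    have "leq C x j" "Dom C x = A" using that j hom by (auto simp: is_join_def leq_refl)
    then have "RD C x = rst (?s \<odot> x) \<odot> RD C j" using RD_of_leq[of x j] hom by simp
    then show ?thesis using \<open>Dom C x = A\<close> hom by simp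
  qed
  ultimately show ?thesis by simp
qed

end

theorem mainTheorem4:
  fixes C :: "('o, 'a, 'z) rdcat_scheme"
    and G U T :: 'o and bT bF m n v :: 'a
  assumes "is_basic_rdrc C"
    and "has_countable_disjoint_joins C"
    and "bT \<in> hom C (Prod C G U) (One C)"
    and "bF \<in> hom C (Prod C G U) (One C)"
    and "nowhere_defined C (Cmp C (Rst C bT) (Rst C bF))"
    and "m \<in> hom C (Prod C G U) T"
    and "n \<in> hom C (Prod C G U) T"
    and "v \<in> hom C (Prod C G U) T"
  shows
    "Cmp C (Cmp C (Pair C (Pair C (Id C (Prod C G U)) (P1 C G U)) v)
                  (RD C (join C (Prod C (Prod C G U) U) T
                          {Cmp C (Rst C (rebind C G U bT)) (rebind C G U m),
                           Cmp C (Rst C (rebind C G U bF)) (rebind C G U n)})))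
           (P1 C (Prod C G U) U)
     = join C (Prod C G U) U
         {Cmp C (Rst C bT)
            (Cmp C (Cmp C (Pair C (Pair C (Id C (Prod C G U)) (P1 C G U)) v)
                          (RD C (rebind C G U m))) (P1 C (Prod C G U) U)),
          Cmp C (Rst C bF)
            (Cmp C (Cmp C (Pair C (Pair C (Id C (Prod C G U)) (P1 C G U)) v)
                          (RD C (rebind C G U n))) (P1 C (Prod C G U) U))}"
proof -
  interpret reverse_diff_restriction_cat_joins C
    using assms(1,2) by unfold_locales (simp_all add: is_basic_rdrc_def is_cartesian_left_additive_def)
  let ?W = "Prod C (Prod C G U) U" and ?p1 = "P1 C (Prod C G U) U"
  let ?Q = "Pair C (Pair C (Id C (Prod C G U)) (P1 C G U)) v"
  define a b where "a = rst (rebind C G U bT) \<odot> rebind C G U m"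
    and "b = rst (rebind C G U bF) \<odot> rebind C G U n"
  have hom: "Dom C bT = Prod C G U" "Dom C bF = Prod C G U" "Dom C m = Prod C G U" "Cod C m = T"
    "Dom C n = Prod C G U" "Cod C n = T" "Dom C v = Prod C G U" "Cod C v = T"
    using assms(3-) by (auto simp: hom_def)
  have ab_hom: "a \<in> hom C ?W T" "b \<in> hom C ?W T"
    unfolding a_def b_def rebind_def using hom by (simp_all add: hom_def)
  have "disjoint C (rst bT \<odot> m) (rst bF \<odot> n)" using disjoint_guards[OF assms(5)] hom by simp
  then have ab: "disjoint C a b"
    unfolding a_def b_def rebind_def using disjoint_cmp_left cmp_guard hom by simp
  obtain j where j: "is_join C ?W T {a, b} j" using is_join_pair_exists[OF ab_hom ab] by blast
  have "is_join C (Prod C G U) U {?Q \<odot> RD C a \<odot> ?p1, ?Q \<odot> RD C b \<odot> ?p1} (?Q \<odot> RD C j \<odot> ?p1)"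
    by (rule is_join_pair_RD[OF ab_hom ab j]) (simp_all add: hom hom_def)
  moreover have "?Q \<odot> RD C a \<odot> ?p1 = rst bT \<odot> (?Q \<odot> RD C (rebind C G U m) \<odot> ?p1)"
    "?Q \<odot> RD C b \<odot> ?p1 = rst bF \<odot> (?Q \<odot> RD C (rebind C G U n) \<odot> ?p1)"
    unfolding a_def b_def using hom
    by (simp_all only: RD_rebind_guard) (simp_all add: rebind_def)
  ultimately have "join C (Prod C G U) U
      {rst bT \<odot> (?Q \<odot> RD C (rebind C G U m) \<odot> ?p1), rst bF \<odot> (?Q \<odot> RD C (rebind C G U n) \<odot> ?p1)}
      = ?Q \<odot> RD C j \<odot> ?p1"
    by (intro join_eqI) simp
  then show ?thesis using join_eqI[OF j] unfolding a_def b_def by simp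
qed

end
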